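(* Let $\mathcal{C}$ be a small category, $n\ge0$, and let $M$ be an indecomposable $k\widetilde{\mathcal{E}}^{\mathcal{C}}_n$-module. Then for every $0\le i\le n+1$ the $k\widetilde{\mathcal{E}}^{\mathcal{C}}_{n+1}$-module $\partial_i^*M$ is indecomposable. Likewise, if $M$ is an indecomposable $k\mathcal{C}$-module, then $\partial_0^*M$ and $\partial_1^*M$ are indecomposable $k\widetilde{\mathcal{G}}^{\mathcal{C}}_1$-modules.
   Context: A module over a small category is a functor to finite-dimensional $k$-vector spaces ($k$ a field); indecomposable means nonzero and not isomorphic to a direct sum of two nonzero modules; $F^*M=M\circ F$. $\widetilde{\mathcal{E}}^{\mathcal{C}}_n=\mathcal{C}^{[n]}$ has objects strings $x_0\xrightarrow{u_1}\cdots\xrightarrow{u_n}x_n$ of morphisms of $\mathcal{C}$ and morphisms commutative ladders $(f_0,\dots,f_n)$; the face functors $\partial_i:\widetilde{\mathcal{E}}^{\mathcal{C}}_{n+1}\to\widetilde{\mathcal{E}}^{\mathcal{C}}_n$ ($0\le i\le n+1$) delete $x_i$ (dropping the first or last morphism for $i=0$, $i=n+1$, and composing $u_{i+1}u_i$ otherwise) and delete $f_i$. $\widetilde{\mathcal{G}}^{\mathcal{C}}_1$ is the category with objects all morphisms $u:a\to b$ of $\mathcal{C}$ and morphisms $[u]\to[v]$ ($v:c\to d$) the identities and the pairs $(w\circ u,\;v\circ w)$ for $w:b\to c$; $\partial_0[u]=b$, $\partial_1[u]=a$. *)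

theory Defs
  imports "Jordan_Normal_Form.Matrix"
begin

record ('o, 'm) cat =
  Obj :: "'o set"
  Arr :: "'m set"
  Dom :: "'m \<Rightarrow> 'o"
  Cod :: "'m \<Rightarrow> 'o"
  Id  :: "'o \<Rightarrow> 'm"
  Comp :: "'m \<Rightarrow> 'm \<Rightarrow> 'm"

definition is_category :: "('o, 'm) cat \<Rightarrow> bool" where
  "is_category C \<longleftrightarrow>
     (\<forall>f\<in>Arr C. Dom C f \<in> Obj C \<and> Cod C f \<in> Obj C) \<and>
     (\<forall>x\<in>Obj C. Id C x \<in> Arr C \<and> Dom C (Id C x) = x \<and> Cod C (Id C x) = x) \<and>
     (\<forall>f\<in>Arr C. \<forall>g\<in>Arr C. Cod C f = Dom C g \<longrightarrow>
        Comp C g f \<in> Arr C \<and> Dom C (Comp C g f) = Dom C f \<and> Cod C (Comp C g f) = Cod C g) \<and>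
     (\<forall>f\<in>Arr C. Comp C f (Id C (Dom C f)) = f \<and> Comp C (Id C (Cod C f)) f = f) \<and>
     (\<forall>f\<in>Arr C. \<forall>g\<in>Arr C. \<forall>h\<in>Arr C. Cod C f = Dom C g \<longrightarrow> Cod C g = Dom C h \<longrightarrow>
        Comp C h (Comp C g f) = Comp C (Comp C h g) f)"

text \<open>A finite-dimensional k-vector space is represented (up to isomorphism) by
k^d; a module M over C assigns to each object x a dimension (fst M x) and to each
arrow f : x \<rightarrow> y a (d y \<times> d x)-matrix (snd M f), functorially.\<close>

type_synonym ('m, 'o, 'k) module = "('o \<Rightarrow> nat) \<times> ('m \<Rightarrow> 'k mat)"

definition is_module :: "('o, 'm) cat \<Rightarrow> ('m, 'o, 'k::field) module \<Rightarrow> bool" where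
  "is_module C M \<longleftrightarrow>
     (\<forall>f\<in>Arr C. snd M f \<in> carrier_mat (fst M (Cod C f)) (fst M (Dom C f))) \<and>
     (\<forall>x\<in>Obj C. snd M (Id C x) = 1\<^sub>m (fst M x)) \<and>
     (\<forall>f\<in>Arr C. \<forall>g\<in>Arr C. Cod C f = Dom C g \<longrightarrow>
        snd M (Comp C g f) = snd M g * snd M f)"

definition nonzero_module :: "('o, 'm) cat \<Rightarrow> ('m, 'o, 'k::field) module \<Rightarrow> bool" where
  "nonzero_module C M \<longleftrightarrow> (\<exists>x\<in>Obj C. fst M x \<noteq> 0)"

definition module_iso :: "('o, 'm) cat \<Rightarrow> ('m, 'o, 'k::field) module \<Rightarrow> ('m, 'o, 'k) module \<Rightarrow> bool" where
  "module_iso C M N \<longleftrightarrow> (\<exists>\<phi> :: 'o \<Rightarrow> 'k mat.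
     (\<forall>x\<in>Obj C. \<phi> x \<in> carrier_mat (fst N x) (fst M x) \<and> invertible_mat (\<phi> x)) \<and>
     (\<forall>f\<in>Arr C. \<phi> (Cod C f) * snd M f = snd N f * \<phi> (Dom C f)))"

definition module_dsum :: "('m, 'o, 'k::field) module \<Rightarrow> ('m, 'o, 'k) module \<Rightarrow> ('m, 'o, 'k) module" where
  "module_dsum M1 M2 = ((\<lambda>x. fst M1 x + fst M2 x),
     (\<lambda>f. four_block_mat (snd M1 f) (0\<^sub>m (dim_row (snd M1 f)) (dim_col (snd M2 f)))
                          (0\<^sub>m (dim_row (snd M2 f)) (dim_col (snd M1 f))) (snd M2 f)))"

definition indecomposable :: "('o, 'm) cat \<Rightarrow> ('m, 'o, 'k::field) module \<Rightarrow> bool" where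
  "indecomposable C M \<longleftrightarrow> is_module C M \<and> nonzero_module C M \<and>
     \<not> (\<exists>M1 M2. is_module C M1 \<and> is_module C M2 \<and> nonzero_module C M1 \<and> nonzero_module C M2 \<and>
              module_iso C M (module_dsum M1 M2))"

definition pullback :: "('o2 \<Rightarrow> 'o) \<Rightarrow> ('m2 \<Rightarrow> 'm) \<Rightarrow> ('m, 'o, 'k) module \<Rightarrow> ('m2, 'o2, 'k) module" where
  "pullback Fo Fm M = (fst M \<circ> Fo, snd M \<circ> Fm)"

text \<open>An object x_0 --u_1--> ... --u_n--> x_n is a pair (xs, us) with xs = [x_0,...,x_n]
and us = [u_1,...,u_n] (so us!j : xs!j \<rightarrow> xs!(j+1)).  An arrow is a triple
(source, target, [f_0,...,f_n]) forming a commutative ladder.\<close>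

type_synonym ('o, 'm) string_obj = "'o list \<times> 'm list"
type_synonym ('o, 'm) ladder = "('o, 'm) string_obj \<times> ('o, 'm) string_obj \<times> 'm list"

definition E_obj :: "('o, 'm) cat \<Rightarrow> nat \<Rightarrow> ('o, 'm) string_obj set" where
  "E_obj C n = {(xs, us). length xs = Suc n \<and> length us = n \<and> set xs \<subseteq> Obj C \<and>
      (\<forall>j<n. us ! j \<in> Arr C \<and> Dom C (us ! j) = xs ! j \<and> Cod C (us ! j) = xs ! Suc j)}"

definition E_arr :: "('o, 'm) cat \<Rightarrow> nat \<Rightarrow> ('o, 'm) ladder set" where
  "E_arr C n = {(X, Y, fs). X \<in> E_obj C n \<and> Y \<in> E_obj C n \<and> length fs = Suc n \<and>
      (\<forall>j\<le>n. fs ! j \<in> Arr C \<and> Dom C (fs ! j) = fst X ! j \<and> Cod C (fs ! j) = fst Y ! j) \<and>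
      (\<forall>j<n. Comp C (snd Y ! j) (fs ! j) = Comp C (fs ! Suc j) (snd X ! j))}"

definition E_cat :: "('o, 'm) cat \<Rightarrow> nat \<Rightarrow> (('o, 'm) string_obj, ('o, 'm) ladder) cat" where
  "E_cat C n = \<lparr> Obj = E_obj C n, Arr = E_arr C n,
      Dom = (\<lambda>(X, Y, fs). X), Cod = (\<lambda>(X, Y, fs). Y),
      Id = (\<lambda>X. (X, X, map (Id C) (fst X))),
      Comp = (\<lambda>(Y', Z, gs) (X, Y, fs). (X, Z, map2 (Comp C) gs fs)) \<rparr>"

text \<open>Face functor \<partial>_i : E_{n+1} \<rightarrow> E_n (0 \<le> i \<le> n+1): delete x_i (dropping the first
morphism if i = 0, the last one if i = n+1, and composing u_{i+1} u_i otherwise) and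
delete f_i.\<close>

definition del_nth :: "nat \<Rightarrow> 'a list \<Rightarrow> 'a list" where
  "del_nth i xs = take i xs @ drop (Suc i) xs"

definition face_obj :: "('o, 'm) cat \<Rightarrow> nat \<Rightarrow> ('o, 'm) string_obj \<Rightarrow> ('o, 'm) string_obj" where
  "face_obj C i X = (let xs = fst X; us = snd X in
     (del_nth i xs,
      if i = 0 then tl us
      else if i = length us then butlast us
      else take (i - 1) us @ [Comp C (us ! i) (us ! (i - 1))] @ drop (Suc i) us))"

definition face_arr :: "('o, 'm) cat \<Rightarrow> nat \<Rightarrow> ('o, 'm) ladder \<Rightarrow> ('o, 'm) ladder" where
  "face_arr C i F = (case F of (X, Y, fs) \<Rightarrow> (face_obj C i X, face_obj C i Y, del_nth i fs))"

text \<open>Objects: arrows u : a \<rightarrow> b of C.  Arrows [u] \<rightarrow> [v] (v : c \<rightarrow> d): the identities,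
encoded (u, u, None), and the pairs (w \<circ> u, v \<circ> w) for w : b \<rightarrow> c, encoded
(u, v, Some (w \<circ> u, v \<circ> w)).\<close>

type_synonym 'm G_arr = "'m \<times> 'm \<times> ('m \<times> 'm) option"

definition G1_arr :: "('o, 'm) cat \<Rightarrow> 'm G_arr set" where
  "G1_arr C = {(u, u, None) | u. u \<in> Arr C} \<union>
     {(u, v, Some (Comp C w u, Comp C v w)) | u v w. u \<in> Arr C \<and> v \<in> Arr C \<and> w \<in> Arr C \<and>
        Dom C w = Cod C u \<and> Cod C w = Dom C v}"

definition G1_comp :: "('o, 'm) cat \<Rightarrow> 'm G_arr \<Rightarrow> 'm G_arr \<Rightarrow> 'm G_arr" where
  "G1_comp C g f = (case (f, g) of
      ((u, _, None), (_, v', h)) \<Rightarrow> (u, v', h)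
    | ((u, _, h), (_, v', None)) \<Rightarrow> (u, v', h)
    | ((u, _, Some (p, q)), (_, v', Some (p', q'))) \<Rightarrow> (u, v', Some (Comp C p' p, Comp C q' q)))"

definition G1_cat :: "('o, 'm) cat \<Rightarrow> ('m, 'm G_arr) cat" where
  "G1_cat C = \<lparr> Obj = Arr C, Arr = G1_arr C,
      Dom = (\<lambda>(u, v, h). u), Cod = (\<lambda>(u, v, h). v),
      Id = (\<lambda>u. (u, u, None)), Comp = G1_comp C \<rparr>"

text \<open>\<partial>_0 [u] = b = Cod u, \<partial>_1 [u] = a = Dom u; on the arrow (w u, v w) : [u] \<rightarrow> [v],
\<partial>_0 gives v w : b \<rightarrow> d and \<partial>_1 gives w u : a \<rightarrow> c; identities go to identities.\<close>

definition G_face0_arr :: "('o, 'm) cat \<Rightarrow> 'm G_arr \<Rightarrow> 'm" where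
  "G_face0_arr C F = (case F of (u, v, None) \<Rightarrow> Id C (Cod C u) | (u, v, Some (p, q)) \<Rightarrow> q)"

definition G_face1_arr :: "('o, 'm) cat \<Rightarrow> 'm G_arr \<Rightarrow> 'm" where
  "G_face1_arr C F = (case F of (u, v, None) \<Rightarrow> Id C (Dom C u) | (u, v, Some (p, q)) \<Rightarrow> p)"

end

theory Submission
  imports Defs
begin

text \<open>Each of the face functors F in question has a section S (a degeneracy for E_(n+1) \<rightarrow> E_n,
and x \<mapsto> [id x] for G_1 \<rightarrow> C) such that every object X is joined to S (F X) by an arrow which F
sends to an identity.  If F^*M \<cong> N1 \<oplus> N2, naturality of the isomorphism forces each Nj to act
invertibly along these arrows, and as the identity along those that are endomorphisms.  Hence
S^*N1 and S^*N2 are again nonzero modules, and M = S^*F^*M \<cong> S^*N1 \<oplus> S^*N2 contradicts the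
indecomposability of M.\<close>

section \<open>Invertible block-diagonal matrices\<close>

lemma invertible_mat_obtain_inverse:
  fixes A :: "'a::semiring_1 mat"
  assumes "A \<in> carrier_mat m m" "invertible_mat A"
  obtains B where "B \<in> carrier_mat m m" "A * B = 1\<^sub>m m" "B * A = 1\<^sub>m m"
proof -
  obtain B where AB: "A * B = 1\<^sub>m (dim_row A)" and BA: "B * A = 1\<^sub>m (dim_row B)"
    using assms(2) unfolding invertible_mat_def inverts_mat_def by blast
  have "dim_col B = m" using arg_cong[OF AB, of dim_col] assms(1) by simp
  moreover have "dim_row B = m" using arg_cong[OF BA, of dim_col] assms(1) by simp
  ultimately show thesis using that AB BA assms(1) by auto
qed

lemma mult_invertible_eq_invertible_obtain_inverse:
  fixes D P Q :: "'a::semiring_1 mat"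
  assumes D: "D \<in> carrier_mat m m"
    and P: "P \<in> carrier_mat m m" "invertible_mat P"
    and Q: "Q \<in> carrier_mat m m" "invertible_mat Q"
    and DP: "D * P = Q"
  obtains E where "E \<in> carrier_mat m m" "D * E = 1\<^sub>m m" "E * D = 1\<^sub>m m"
proof -
  obtain S where S: "S \<in> carrier_mat m m" "P * S = 1\<^sub>m m" "S * P = 1\<^sub>m m"
    using invertible_mat_obtain_inverse[OF P] .
  obtain R where R: "R \<in> carrier_mat m m" "Q * R = 1\<^sub>m m" "R * Q = 1\<^sub>m m"
    using invertible_mat_obtain_inverse[OF Q] .
  have "D = D * (P * S)" using D S by simp
  also have "\<dots> = Q * S" using D P(1) S(1) DP by (simp flip: assoc_mult_mat)
  finally have DQS: "D = Q * S" .
  have "D * (P * R) = Q * R" using D P(1) R(1) DP by (simp flip: assoc_mult_mat)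
  moreover have "(P * R) * (Q * S) = P * ((R * Q) * S)"
    using assoc_mult_mat[OF P(1) R(1) mult_carrier_mat[OF Q(1) S(1)]] P(1) Q(1) R(1) S(1) by simp
  ultimately have "D * (P * R) = 1\<^sub>m m" "(P * R) * D = 1\<^sub>m m"
    using R S DQS by simp_all
  then show thesis using that mult_carrier_mat[OF P(1) R(1)] by blast
qed

lemma mult_invertible_eq_self:
  fixes D P :: "'a::semiring_1 mat"
  assumes D: "D \<in> carrier_mat m m" and P: "P \<in> carrier_mat m m" "invertible_mat P"
    and DP: "D * P = P"
  shows "D = 1\<^sub>m m"
proof -
  obtain S where S: "S \<in> carrier_mat m m" "P * S = 1\<^sub>m m" "S * P = 1\<^sub>m m"
    using invertible_mat_obtain_inverse[OF P] .
  have "D = D * (P * S)" using D S by simp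
  also have "\<dots> = P * S" using D P(1) S(1) DP by (simp flip: assoc_mult_mat)
  finally show ?thesis using S(2) by simp
qed

lemma index_mult_mat_sum:
  fixes D E :: "'a::semiring_0 mat"
  assumes "D \<in> carrier_mat n m" "E \<in> carrier_mat m p" "i < n" "j < p"
  shows "(D * E) $$ (i, j) = (\<Sum>k<m. D $$ (i, k) * E $$ (k, j))"
  using assms by (auto simp: scalar_prod_def lessThan_atLeast0 intro!: sum.cong)

lemma right_inverse_row_nonzero:
  fixes D E :: "'a::semiring_1 mat"
  assumes "D \<in> carrier_mat m m" "E \<in> carrier_mat m m" "D * E = 1\<^sub>m m" "i < m"
  shows "\<exists>k<m. D $$ (i, k) \<noteq> 0"
proof (rule ccontr)
  assume "\<not> ?thesis"
  then have "(\<Sum>k<m. D $$ (i, k) * E $$ (k, i)) = 0" by simp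
  then have "(D * E) $$ (i, i) = 0"
    using index_mult_mat_sum[OF assms(1,2,4,4)] by simp
  then show False using assms(3,4) by simp
qed

lemma left_inverse_col_nonzero:
  fixes D E :: "'a::semiring_1 mat"
  assumes "D \<in> carrier_mat m m" "E \<in> carrier_mat m m" "E * D = 1\<^sub>m m" "j < m"
  shows "\<exists>k<m. D $$ (k, j) \<noteq> 0"
proof (rule ccontr)
  assume "\<not> ?thesis"
  then have "(\<Sum>k<m. E $$ (j, k) * D $$ (k, j)) = 0" by simp
  then have "(E * D) $$ (j, j) = 0"
    using index_mult_mat_sum[OF assms(2,1,4,4)] by simp
  then show False using assms(3,4) by simp
qed

lemma invertible_block_diag_dims:
  fixes A B E :: "'a::semiring_1 mat"
  assumes A: "A \<in> carrier_mat r c" and B: "B \<in> carrier_mat r' c'"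
    and m: "r + r' = m" "c + c' = m" and E: "E \<in> carrier_mat m m"
    and inv: "four_block_mat A (0\<^sub>m r c') (0\<^sub>m r' c) B * E = 1\<^sub>m m"
      "E * four_block_mat A (0\<^sub>m r c') (0\<^sub>m r' c) B = 1\<^sub>m m"
  shows "(r = 0 \<longleftrightarrow> c = 0) \<and> (r' = 0 \<longleftrightarrow> c' = 0)"
proof -
  define D where "D = four_block_mat A (0\<^sub>m r c') (0\<^sub>m r' c) B"
  have D: "D \<in> carrier_mat m m"
    unfolding D_def using four_block_carrier_mat[OF A B] m by simp
  have row: "\<exists>k<m. D $$ (i, k) \<noteq> 0" if "i < m" for i
    using right_inverse_row_nonzero[OF D E inv(1)[folded D_def] that] .
  have col: "\<exists>k<m. D $$ (k, j) \<noteq> 0" if "j < m" for j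
    using left_inverse_col_nonzero[OF D E inv(2)[folded D_def] that] .
  have entry: "D $$ (i, j) = (if i < r then if j < c then A $$ (i, j) else 0
      else if j < c then 0 else B $$ (i - r, j - c))" if "i < m" "j < m" for i j
    unfolding D_def using that A B m by auto
  have "c = 0" if "r = 0"
  proof (rule ccontr)
    assume "c \<noteq> 0"
    then obtain k where "k < m" "D $$ (k, 0) \<noteq> 0" using col[of 0] m by auto
    then show False using entry[of k 0] \<open>r = 0\<close> \<open>c \<noteq> 0\<close> by auto
  qed
  moreover have "r = 0" if "c = 0"
  proof (rule ccontr)
    assume "r \<noteq> 0"
    then obtain k where "k < m" "D $$ (0, k) \<noteq> 0" using row[of 0] m by auto
    then show False using entry[of 0 k] \<open>c = 0\<close> \<open>r \<noteq> 0\<close> by auto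
  qed
  moreover have "c' = 0" if "r' = 0"
  proof (rule ccontr)
    assume "c' \<noteq> 0"
    then obtain k where "k < m" "D $$ (k, c) \<noteq> 0" using col[of c] m by auto
    then show False using entry[of k c] \<open>r' = 0\<close> \<open>c' \<noteq> 0\<close> m by auto
  qed
  moreover have "r' = 0" if "c' = 0"
  proof (rule ccontr)
    assume "r' \<noteq> 0"
    then obtain k where "k < m" "D $$ (r, k) \<noteq> 0" using row[of r] m by auto
    then show False using entry[of r k] \<open>c' = 0\<close> \<open>r' \<noteq> 0\<close> m by auto
  qed
  ultimately show ?thesis by blast
qed

lemma block_diag_eq_one:
  fixes A B :: "'a::semiring_1 mat"
  assumes A: "A \<in> carrier_mat r r" and B: "B \<in> carrier_mat r' r'"
    and eq: "four_block_mat A (0\<^sub>m r r') (0\<^sub>m r' r) B = 1\<^sub>m (r + r')"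
  shows "A = 1\<^sub>m r \<and> B = 1\<^sub>m r'"
proof
  show "A = 1\<^sub>m r"
  proof (rule eq_matI)
    fix i j assume "i < dim_row (1\<^sub>m r :: 'a mat)" "j < dim_col (1\<^sub>m r :: 'a mat)"
    then show "A $$ (i, j) = 1\<^sub>m r $$ (i, j)"
      using arg_cong[OF eq, of "\<lambda>D. D $$ (i, j)"] A B by simp
  qed (use A in auto)
  show "B = 1\<^sub>m r'"
  proof (rule eq_matI)
    fix i j assume "i < dim_row (1\<^sub>m r' :: 'a mat)" "j < dim_col (1\<^sub>m r' :: 'a mat)"
    then show "B $$ (i, j) = 1\<^sub>m r' $$ (i, j)"
      using arg_cong[OF eq, of "\<lambda>D. D $$ (r + i, r + j)"] A B by simp
  qed (use B in auto)
qed

section \<open>Pullbacks and decompositions of modules\<close>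

definition is_functor ::
    "('o2, 'm2) cat \<Rightarrow> ('o, 'm) cat \<Rightarrow> ('o2 \<Rightarrow> 'o) \<Rightarrow> ('m2 \<Rightarrow> 'm) \<Rightarrow> bool" where
  "is_functor B A Fo Fm \<longleftrightarrow> (\<forall>X\<in>Obj B. Fo X \<in> Obj A) \<and>
     (\<forall>a\<in>Arr B. Fm a \<in> Arr A \<and> Dom A (Fm a) = Fo (Dom B a) \<and> Cod A (Fm a) = Fo (Cod B a)) \<and>
     (\<forall>X\<in>Obj B. Fm (Id B X) = Id A (Fo X)) \<and>
     (\<forall>a\<in>Arr B. \<forall>b\<in>Arr B. Cod B a = Dom B b \<longrightarrow> Fm (Comp B b a) = Comp A (Fm b) (Fm a))"

lemma is_module_pullbackI:
  fixes M :: "('m, 'o, 'k::field) module"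
  assumes M: "is_module A M"
    and arr: "\<And>f. f \<in> Arr B \<Longrightarrow>
      Fm f \<in> Arr A \<and> Dom A (Fm f) = Fo (Dom B f) \<and> Cod A (Fm f) = Fo (Cod B f)"
    and id: "\<And>x. x \<in> Obj B \<Longrightarrow> snd M (Fm (Id B x)) = 1\<^sub>m (fst M (Fo x))"
    and comp: "\<And>f g. f \<in> Arr B \<Longrightarrow> g \<in> Arr B \<Longrightarrow> Cod B f = Dom B g \<Longrightarrow>
      Fm (Comp B g f) = Comp A (Fm g) (Fm f)"
  shows "is_module B (pullback Fo Fm M)"
  unfolding is_module_def pullback_def
proof (intro conjI ballI impI)
  fix f assume "f \<in> Arr B"
  then show "snd (fst M \<circ> Fo, snd M \<circ> Fm) f \<in> carrier_mat
      (fst (fst M \<circ> Fo, snd M \<circ> Fm) (Cod B f)) (fst (fst M \<circ> Fo, snd M \<circ> Fm) (Dom B f))"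
    using M arr[of f] unfolding is_module_def by force
next
  fix f g assume "f \<in> Arr B" "g \<in> Arr B" "Cod B f = Dom B g"
  then show "snd (fst M \<circ> Fo, snd M \<circ> Fm) (Comp B g f) =
      snd (fst M \<circ> Fo, snd M \<circ> Fm) g * snd (fst M \<circ> Fo, snd M \<circ> Fm) f"
    using M arr[of f] arr[of g] comp unfolding is_module_def by simp
qed (simp add: id)

lemma is_module_pullback:
  fixes M :: "('m, 'o, 'k::field) module"
  assumes M: "is_module A M" and F: "is_functor B A Fo Fm"
  shows "is_module B (pullback Fo Fm M)"
proof (rule is_module_pullbackI[OF M])
  fix x assume "x \<in> Obj B"
  then show "snd M (Fm (Id B x)) = 1\<^sub>m (fst M (Fo x))"
    using M F unfolding is_module_def is_functor_def by simp
qed (use F in \<open>auto simp: is_functor_def\<close>)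

lemma pullback_module_dsum:
  "pullback Fo Fm (module_dsum N1 N2) = module_dsum (pullback Fo Fm N1) (pullback Fo Fm N2)"
  by (simp add: pullback_def module_dsum_def comp_def)

lemma module_iso_pullback:
  assumes iso: "module_iso B M N"
    and obj: "\<And>x. x \<in> Obj A \<Longrightarrow> Fo x \<in> Obj B"
    and arr: "\<And>f. f \<in> Arr A \<Longrightarrow>
      Fm f \<in> Arr B \<and> Dom B (Fm f) = Fo (Dom A f) \<and> Cod B (Fm f) = Fo (Cod A f)"
  shows "module_iso A (pullback Fo Fm M) (pullback Fo Fm N)"
proof -
  obtain \<phi> where "\<forall>x\<in>Obj B. \<phi> x \<in> carrier_mat (fst N x) (fst M x) \<and> invertible_mat (\<phi> x)"
    and "\<forall>f\<in>Arr B. \<phi> (Cod B f) * snd M f = snd N f * \<phi> (Dom B f)"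
    using iso unfolding module_iso_def by blast
  then show ?thesis
    unfolding module_iso_def pullback_def using obj arr
    by (intro exI[of _ "\<phi> \<circ> Fo"]) force
qed

lemma module_iso_cong_left:
  assumes "module_iso A M N"
    and "\<And>x. x \<in> Obj A \<Longrightarrow> fst M' x = fst M x" "\<And>f. f \<in> Arr A \<Longrightarrow> snd M' f = snd M f"
  shows "module_iso A M' N"
  using assms unfolding module_iso_def by auto

lemma module_iso_dim:
  assumes "module_iso B M N" "x \<in> Obj B"
  shows "fst N x = fst M x"
  using assms unfolding module_iso_def invertible_mat_def square_mat.simps by fastforce

lemma module_identity_action_dims:
  assumes "is_module B M" "a \<in> Arr B" "snd M a = 1\<^sub>m (fst M (Dom B a))"
  shows "fst M (Cod B a) = fst M (Dom B a)"
  using assms unfolding is_module_def by (metis carrier_matD(1) index_one_mat(2))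

lemma module_iso_identity_action_invertible:
  fixes M N :: "('m, 'o, 'k::field) module"
  assumes iso: "module_iso B M N" and M: "is_module B M"
    and a: "a \<in> Arr B" "Dom B a \<in> Obj B" "Cod B a \<in> Obj B"
    and Na: "snd N a \<in> carrier_mat (fst N (Cod B a)) (fst N (Dom B a))"
    and Ma: "snd M a = 1\<^sub>m (fst M (Dom B a))"
  obtains E where "E \<in> carrier_mat (fst M (Dom B a)) (fst M (Dom B a))"
    "snd N a * E = 1\<^sub>m (fst M (Dom B a))" "E * snd N a = 1\<^sub>m (fst M (Dom B a))"
proof -
  define d where "d = fst M (Dom B a)"
  obtain \<phi> where \<phi>: "\<forall>x\<in>Obj B. \<phi> x \<in> carrier_mat (fst N x) (fst M x) \<and> invertible_mat (\<phi> x)"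
    and nat: "\<forall>f\<in>Arr B. \<phi> (Cod B f) * snd M f = snd N f * \<phi> (Dom B f)"
    using iso unfolding module_iso_def by blast
  have dims: "fst M (Cod B a) = d" "fst N (Dom B a) = d" "fst N (Cod B a) = d"
    using module_identity_action_dims[OF M a(1) Ma] module_iso_dim[OF iso] a unfolding d_def by auto
  have P: "\<phi> (Dom B a) \<in> carrier_mat d d" "invertible_mat (\<phi> (Dom B a))"
    and Q: "\<phi> (Cod B a) \<in> carrier_mat d d" "invertible_mat (\<phi> (Cod B a))"
    using \<phi> a dims unfolding d_def by auto
  have "\<phi> (Cod B a) * snd M a = snd N a * \<phi> (Dom B a)"
    using nat a(1) by blast
  then have "snd N a * \<phi> (Dom B a) = \<phi> (Cod B a)"
    using Ma Q(1) unfolding d_def by simp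
  with Na dims P Q show thesis
    using that mult_invertible_eq_invertible_obtain_inverse unfolding d_def by metis
qed

lemma module_iso_identity_action_endo:
  fixes M N :: "('m, 'o, 'k::field) module"
  assumes iso: "module_iso B M N"
    and a: "a \<in> Arr B" "Dom B a \<in> Obj B" "Cod B a = Dom B a"
    and Na: "snd N a \<in> carrier_mat (fst N (Dom B a)) (fst N (Dom B a))"
    and Ma: "snd M a = 1\<^sub>m (fst M (Dom B a))"
  shows "snd N a = 1\<^sub>m (fst N (Dom B a))"
proof -
  obtain \<phi> where \<phi>: "\<forall>x\<in>Obj B. \<phi> x \<in> carrier_mat (fst N x) (fst M x) \<and> invertible_mat (\<phi> x)"
    and nat: "\<forall>f\<in>Arr B. \<phi> (Cod B f) * snd M f = snd N f * \<phi> (Dom B f)"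
    using iso unfolding module_iso_def by blast
  have P: "\<phi> (Dom B a) \<in> carrier_mat (fst N (Dom B a)) (fst N (Dom B a))"
    "invertible_mat (\<phi> (Dom B a))"
    using \<phi> a module_iso_dim[OF iso a(2)] by auto
  have "snd N a * \<phi> (Dom B a) = \<phi> (Dom B a)"
    using nat a Ma P(1) module_iso_dim[OF iso a(2)] by force
  then show ?thesis using mult_invertible_eq_self[OF Na P] by simp
qed

lemma module_dsum_action:
  assumes "is_module B N1" "is_module B N2" "a \<in> Arr B"
  shows "snd (module_dsum N1 N2) a = four_block_mat (snd N1 a)
      (0\<^sub>m (fst N1 (Cod B a)) (fst N2 (Dom B a))) (0\<^sub>m (fst N2 (Cod B a)) (fst N1 (Dom B a))) (snd N2 a)"
proof -
  have "snd N1 a \<in> carrier_mat (fst N1 (Cod B a)) (fst N1 (Dom B a))"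
    "snd N2 a \<in> carrier_mat (fst N2 (Cod B a)) (fst N2 (Dom B a))"
    using assms unfolding is_module_def by blast+
  then show ?thesis unfolding module_dsum_def by auto
qed

lemma module_dsum_action_carrier:
  assumes "is_module B N1" "is_module B N2" "a \<in> Arr B"
  shows "snd (module_dsum N1 N2) a \<in>
    carrier_mat (fst (module_dsum N1 N2) (Cod B a)) (fst (module_dsum N1 N2) (Dom B a))"
  using assms four_block_carrier_mat
  unfolding module_dsum_action[OF assms] unfolding module_dsum_def is_module_def by auto

lemma summands_dims_along_identity_action:
  fixes M N1 N2 :: "('m, 'o, 'k::field) module"
  assumes M: "is_module B M" and N: "is_module B N1" "is_module B N2"
    and iso: "module_iso B M (module_dsum N1 N2)"
    and a: "a \<in> Arr B" "Dom B a \<in> Obj B" "Cod B a \<in> Obj B"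
    and Ma: "snd M a = 1\<^sub>m (fst M (Dom B a))"
  shows "(fst N1 (Dom B a) = 0 \<longleftrightarrow> fst N1 (Cod B a) = 0) \<and>
    (fst N2 (Dom B a) = 0 \<longleftrightarrow> fst N2 (Cod B a) = 0)"
proof -
  obtain E where E: "E \<in> carrier_mat (fst M (Dom B a)) (fst M (Dom B a))"
    "snd (module_dsum N1 N2) a * E = 1\<^sub>m (fst M (Dom B a))"
    "E * snd (module_dsum N1 N2) a = 1\<^sub>m (fst M (Dom B a))"
    using module_iso_identity_action_invertible[OF iso M a
        module_dsum_action_carrier[OF N a(1)] Ma] .
  have "fst N1 (Cod B a) + fst N2 (Cod B a) = fst M (Dom B a)"
    "fst N1 (Dom B a) + fst N2 (Dom B a) = fst M (Dom B a)"
    using module_iso_dim[OF iso] a module_identity_action_dims[OF M a(1) Ma]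
    by (auto simp: module_dsum_def)
  then show ?thesis
    using invertible_block_diag_dims[OF _ _ _ _ E(1)] E(2,3) N a(1)
    unfolding module_dsum_action[OF N a(1)] is_module_def by blast
qed

lemma summands_identity_action:
  fixes M N1 N2 :: "('m, 'o, 'k::field) module"
  assumes N: "is_module B N1" "is_module B N2"
    and iso: "module_iso B M (module_dsum N1 N2)"
    and a: "a \<in> Arr B" "Dom B a \<in> Obj B" "Cod B a = Dom B a"
    and Ma: "snd M a = 1\<^sub>m (fst M (Dom B a))"
  shows "snd N1 a = 1\<^sub>m (fst N1 (Dom B a)) \<and> snd N2 a = 1\<^sub>m (fst N2 (Dom B a))"
proof -
  have "snd (module_dsum N1 N2) a = 1\<^sub>m (fst N1 (Dom B a) + fst N2 (Dom B a))"
    using module_iso_identity_action_endo[OF iso a _ Ma] module_dsum_action_carrier[OF N a(1)] a(3)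
    by (simp add: module_dsum_def)
  then show ?thesis
    using block_diag_eq_one N a unfolding module_dsum_action[OF N a(1)] is_module_def by metis
qed

section \<open>Functors with a section\<close>

text \<open>Sm need not preserve identities: for the faces of G1_cat it sends Id C x to
(Id C x, Id C x, Some (Id C x, Id C x)), which differs from the identity (Id C x, Id C x, None).\<close>

locale sectioned_functor =
  fixes A :: "('o, 'm) cat" and B :: "('p, 'n) cat"
    and Fo :: "'p \<Rightarrow> 'o" and Fm :: "'n \<Rightarrow> 'm" and So :: "'o \<Rightarrow> 'p" and Sm :: "'m \<Rightarrow> 'n"
  assumes identity_arr: "\<And>x. x \<in> Obj A \<Longrightarrow> Id A x \<in> Arr A \<and> Dom A (Id A x) = x \<and> Cod A (Id A x) = x"
    and dom_cod_obj: "\<And>a. a \<in> Arr B \<Longrightarrow> Dom B a \<in> Obj B \<and> Cod B a \<in> Obj B"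
    and F_is_functor: "is_functor B A Fo Fm"
    and section_obj: "\<And>x. x \<in> Obj A \<Longrightarrow> So x \<in> Obj B \<and> Fo (So x) = x"
    and section_arr: "\<And>f. f \<in> Arr A \<Longrightarrow>
      Sm f \<in> Arr B \<and> Dom B (Sm f) = So (Dom A f) \<and> Cod B (Sm f) = So (Cod A f) \<and> Fm (Sm f) = f"
    and section_comp: "\<And>f g. f \<in> Arr A \<Longrightarrow> g \<in> Arr A \<Longrightarrow> Cod A f = Dom A g \<Longrightarrow>
      Sm (Comp A g f) = Comp B (Sm g) (Sm f)"
    and connecting_arr: "\<And>X. X \<in> Obj B \<Longrightarrow> \<exists>a\<in>Arr B. Fm a = Id A (Fo X) \<and>
      (Dom B a = X \<and> Cod B a = So (Fo X) \<or> Dom B a = So (Fo X) \<and> Cod B a = X)"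
begin

lemma functor_obj: "X \<in> Obj B \<Longrightarrow> Fo X \<in> Obj A"
  using F_is_functor unfolding is_functor_def by blast

lemma pullback_vertical_action:
  fixes M :: "('m, 'o, 'k::field) module"
  assumes M: "is_module A M" and a: "a \<in> Arr B" "Fm a = Id A (Fo (Dom B a))"
  shows "snd (pullback Fo Fm M) a = 1\<^sub>m (fst (pullback Fo Fm M) (Dom B a))"
  using M a functor_obj dom_cod_obj unfolding is_module_def pullback_def by simp

lemma is_module_pullback_section:
  fixes N :: "('n, 'p, 'k::field) module"
  assumes N: "is_module B N"
    and vertical: "\<And>a. a \<in> Arr B \<Longrightarrow> Fm a = Id A (Fo (Dom B a)) \<Longrightarrow> Cod B a = Dom B a \<Longrightarrow>
      snd N a = 1\<^sub>m (fst N (Dom B a))"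
  shows "is_module A (pullback So Sm N)"
proof (rule is_module_pullbackI[OF N])
  fix x assume x: "x \<in> Obj A"
  then show "snd N (Sm (Id A x)) = 1\<^sub>m (fst N (So x))"
    using vertical[of "Sm (Id A x)"] section_arr[of "Id A x"] identity_arr section_obj by simp
qed (use section_arr section_comp in auto)

lemma nonzero_pullback_section:
  fixes N :: "('n, 'p, 'k::field) module"
  assumes N: "nonzero_module B N"
    and vertical: "\<And>a. a \<in> Arr B \<Longrightarrow> Fm a = Id A (Fo (Dom B a)) \<Longrightarrow>
      fst N (Dom B a) = 0 \<longleftrightarrow> fst N (Cod B a) = 0"
  shows "nonzero_module A (pullback So Sm N)"
proof -
  obtain X where X: "X \<in> Obj B" "fst N X \<noteq> 0"
    using N unfolding nonzero_module_def by blast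
  obtain a where a: "a \<in> Arr B" "Fm a = Id A (Fo X)"
    "Dom B a = X \<and> Cod B a = So (Fo X) \<or> Dom B a = So (Fo X) \<and> Cod B a = X"
    using connecting_arr[OF X(1)] by blast
  have "Fo X \<in> Obj A" using functor_obj[OF X(1)] .
  moreover from this have "fst N (So (Fo X)) \<noteq> 0"
    using vertical[OF a(1)] a(2,3) X(2) section_obj by force
  ultimately show ?thesis unfolding nonzero_module_def pullback_def by auto
qed

lemma module_iso_pullback_section:
  assumes "module_iso B (pullback Fo Fm M) N"
  shows "module_iso A M (pullback So Sm N)"
proof (rule module_iso_cong_left)
  show "module_iso A (pullback So Sm (pullback Fo Fm M)) (pullback So Sm N)"
    by (rule module_iso_pullback[OF assms]) (simp_all add: section_obj section_arr)
qed (simp_all add: pullback_def section_obj section_arr)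

theorem indecomposable_pullback:
  fixes M :: "('m, 'o, 'k::field) module"
  assumes "indecomposable A M"
  shows "indecomposable B (pullback Fo Fm M)"
proof -
  have M: "is_module A M" and M_nonzero: "nonzero_module A M"
    and M_indec: "\<And>M1 M2. is_module A M1 \<Longrightarrow> is_module A M2 \<Longrightarrow> nonzero_module A M1 \<Longrightarrow>
      nonzero_module A M2 \<Longrightarrow> \<not> module_iso A M (module_dsum M1 M2)"
    using assms unfolding indecomposable_def by blast+
  have "nonzero_module B (pullback Fo Fm M)"
    using M_nonzero section_obj unfolding nonzero_module_def pullback_def by force
  moreover have "\<not> (\<exists>N1 N2. is_module B N1 \<and> is_module B N2 \<and> nonzero_module B N1 \<and>
      nonzero_module B N2 \<and> module_iso B (pullback Fo Fm M) (module_dsum N1 N2))"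
  proof (intro notI, elim exE conjE)
    fix N1 N2 :: "('n, 'p, 'k) module"
    assume N: "is_module B N1" "is_module B N2" "nonzero_module B N1" "nonzero_module B N2"
      and iso: "module_iso B (pullback Fo Fm M) (module_dsum N1 N2)"
    note FM = is_module_pullback[OF M F_is_functor] and vertical = pullback_vertical_action[OF M]
    have "snd N1 a = 1\<^sub>m (fst N1 (Dom B a)) \<and> snd N2 a = 1\<^sub>m (fst N2 (Dom B a))"
      if "a \<in> Arr B" "Fm a = Id A (Fo (Dom B a))" "Cod B a = Dom B a" for a
      using summands_identity_action[OF N(1,2) iso _ _ _ vertical] that dom_cod_obj by blast
    then have "is_module A (pullback So Sm N1)" "is_module A (pullback So Sm N2)"
      using is_module_pullback_section N(1,2) by blast+
    moreover have "(fst N1 (Dom B a) = 0 \<longleftrightarrow> fst N1 (Cod B a) = 0) \<and>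
        (fst N2 (Dom B a) = 0 \<longleftrightarrow> fst N2 (Cod B a) = 0)"
      if "a \<in> Arr B" "Fm a = Id A (Fo (Dom B a))" for a
      using summands_dims_along_identity_action[OF FM N(1,2) iso _ _ _ vertical] that dom_cod_obj
      by blast
    then have "nonzero_module A (pullback So Sm N1)" "nonzero_module A (pullback So Sm N2)"
      using nonzero_pullback_section N(3,4) by blast+
    moreover have "module_iso A M (module_dsum (pullback So Sm N1) (pullback So Sm N2))"
      using module_iso_pullback_section[OF iso] by (simp add: pullback_module_dsum)
    ultimately show False using M_indec by blast
  qed
  ultimately show ?thesis
    unfolding indecomposable_def using is_module_pullback[OF M F_is_functor] by blast
qed

end

context
  fixes C :: "('o, 'm) cat"
  assumes C: "is_category C"
begin

lemma cat_dom_obj: "f \<in> Arr C \<Longrightarrow> Dom C f \<in> Obj C"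
  and cat_cod_obj: "f \<in> Arr C \<Longrightarrow> Cod C f \<in> Obj C"
  and cat_id_arr [simp]: "x \<in> Obj C \<Longrightarrow> Id C x \<in> Arr C"
  and cat_dom_id [simp]: "x \<in> Obj C \<Longrightarrow> Dom C (Id C x) = x"
  and cat_cod_id [simp]: "x \<in> Obj C \<Longrightarrow> Cod C (Id C x) = x"
  and cat_comp_arr: "f \<in> Arr C \<Longrightarrow> g \<in> Arr C \<Longrightarrow> Cod C f = Dom C g \<Longrightarrow> Comp C g f \<in> Arr C"
  and cat_dom_comp: "f \<in> Arr C \<Longrightarrow> g \<in> Arr C \<Longrightarrow> Cod C f = Dom C g \<Longrightarrow>
    Dom C (Comp C g f) = Dom C f"
  and cat_cod_comp: "f \<in> Arr C \<Longrightarrow> g \<in> Arr C \<Longrightarrow> Cod C f = Dom C g \<Longrightarrow>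
    Cod C (Comp C g f) = Cod C g"
  and cat_comp_id_right: "f \<in> Arr C \<Longrightarrow> Dom C f = x \<Longrightarrow> Comp C f (Id C x) = f"
  and cat_comp_id_left: "f \<in> Arr C \<Longrightarrow> Cod C f = y \<Longrightarrow> Comp C (Id C y) f = f"
  and cat_comp_assoc: "f \<in> Arr C \<Longrightarrow> g \<in> Arr C \<Longrightarrow> h \<in> Arr C \<Longrightarrow>
    Cod C f = Dom C g \<Longrightarrow> Cod C g = Dom C h \<Longrightarrow> Comp C h (Comp C g f) = Comp C (Comp C h g) f"
  using C unfolding is_category_def by blast+

lemma cat_paste_squares:
  assumes arr: "f0 \<in> Arr C" "f1 \<in> Arr C" "f2 \<in> Arr C" "u1 \<in> Arr C" "u2 \<in> Arr C"
      "v1 \<in> Arr C" "v2 \<in> Arr C"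
    and dom_cod: "Cod C f0 = Dom C v1" "Cod C v1 = Dom C v2" "Cod C u1 = Dom C f1"
      "Cod C u1 = Dom C u2" "Cod C f1 = Dom C v2" "Cod C u2 = Dom C f2"
    and square1: "Comp C v1 f0 = Comp C f1 u1"
    and square2: "Comp C v2 f1 = Comp C f2 u2"
  shows "Comp C (Comp C v2 v1) f0 = Comp C f2 (Comp C u2 u1)"
proof -
  have "Comp C (Comp C v2 v1) f0 = Comp C v2 (Comp C v1 f0)"
    using arr dom_cod by (simp add: cat_comp_assoc)
  also have "\<dots> = Comp C (Comp C v2 f1) u1"
    using arr dom_cod by (simp add: square1 cat_comp_assoc)
  also have "\<dots> = Comp C f2 (Comp C u2 u1)"
    using arr dom_cod by (simp add: square2 cat_comp_assoc)
  finally show ?thesis .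
qed

end

definition ins_nth :: "nat \<Rightarrow> 'a \<Rightarrow> 'a list \<Rightarrow> 'a list" where
  "ins_nth i y xs = take i xs @ y # drop i xs"

lemma length_ins_nth: "i \<le> length xs \<Longrightarrow> length (ins_nth i y xs) = Suc (length xs)"
  unfolding ins_nth_def by simp

lemma nth_ins_nth: "i \<le> length xs \<Longrightarrow> j \<le> length xs \<Longrightarrow>
    ins_nth i y xs ! j = (if j < i then xs ! j else if j = i then y else xs ! (j - 1))"
  unfolding ins_nth_def by (auto simp: nth_append min_def nth_Cons')

lemma del_nth_ins_nth: "i \<le> length xs \<Longrightarrow> del_nth i (ins_nth i y xs) = xs"
  unfolding ins_nth_def del_nth_def by simp

lemma ins_nth_map2: "length xs = length ys \<Longrightarrow>
    ins_nth i (f x y) (map2 f xs ys) = map2 f (ins_nth i x xs) (ins_nth i y ys)"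
  unfolding ins_nth_def by (simp add: take_map drop_map take_zip drop_zip)

lemma length_del_nth: "i < length xs \<Longrightarrow> length (del_nth i xs) = length xs - 1"
  unfolding del_nth_def by simp

lemma nth_del_nth: "i < length xs \<Longrightarrow> j < length xs - 1 \<Longrightarrow>
    del_nth i xs ! j = xs ! (if j < i then j else Suc j)"
  unfolding del_nth_def by (auto simp: nth_append min_def)

lemma set_del_nth: "set (del_nth i xs) \<subseteq> set xs"
  unfolding del_nth_def using set_take_subset set_drop_subset by fastforce

lemma del_nth_map: "del_nth i (map f xs) = map f (del_nth i xs)"
  unfolding del_nth_def by (simp add: take_map drop_map)

lemma del_nth_map2: "length xs = length ys \<Longrightarrow>
    del_nth i (map2 f xs ys) = map2 f (del_nth i xs) (del_nth i ys)"
  unfolding del_nth_def by (simp add: take_map drop_map take_zip drop_zip zip_append)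

lemma del_nth_list_update: "del_nth i (xs[i := y]) = del_nth i xs"
  unfolding del_nth_def by (simp add: take_update_cancel drop_update_cancel)

section \<open>Faces and degeneracies of E_n\<close>

lemma E_cat_simps [simp]:
  "Obj (E_cat C n) = E_obj C n" "Arr (E_cat C n) = E_arr C n"
  "Dom (E_cat C n) (X, Y, fs) = X" "Cod (E_cat C n) (X, Y, fs) = Y"
  "Id (E_cat C n) X = (X, X, map (Id C) (fst X))"
  "Comp (E_cat C n) (Y', Z, gs) (X, Y, fs) = (X, Z, map2 (Comp C) gs fs)"
  unfolding E_cat_def by simp_all

lemma mem_E_obj: "X \<in> E_obj C n \<longleftrightarrow>
    length (fst X) = Suc n \<and> length (snd X) = n \<and> set (fst X) \<subseteq> Obj C \<and>
    (\<forall>j<n. snd X ! j \<in> Arr C \<and> Dom C (snd X ! j) = fst X ! j \<and> Cod C (snd X ! j) = fst X ! Suc j)"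
  by (cases X) (simp add: E_obj_def)

lemma mem_E_arr: "(X, Y, fs) \<in> E_arr C n \<longleftrightarrow> X \<in> E_obj C n \<and> Y \<in> E_obj C n \<and> length fs = Suc n \<and>
    (\<forall>j\<le>n. fs ! j \<in> Arr C \<and> Dom C (fs ! j) = fst X ! j \<and> Cod C (fs ! j) = fst Y ! j) \<and>
    (\<forall>j<n. Comp C (snd Y ! j) (fs ! j) = Comp C (fs ! Suc j) (snd X ! j))"
  unfolding E_arr_def by simp

lemma E_obj_nth_obj: "X \<in> E_obj C n \<Longrightarrow> j \<le> n \<Longrightarrow> fst X ! j \<in> Obj C"
  unfolding mem_E_obj by (metis le_imp_less_Suc nth_mem subsetD)

lemma E_obj_nth_arr: "X \<in> E_obj C n \<Longrightarrow> j < n \<Longrightarrow>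
    snd X ! j \<in> Arr C \<and> Dom C (snd X ! j) = fst X ! j \<and> Cod C (snd X ! j) = fst X ! Suc j"
  unfolding mem_E_obj by blast

lemma fst_face_obj: "fst (face_obj C i X) = del_nth i (fst X)"
  unfolding face_obj_def Let_def by simp

lemma length_snd_face_obj: "length (snd X) = Suc n \<Longrightarrow> i \<le> Suc n \<Longrightarrow>
    length (snd (face_obj C i X)) = n"
  unfolding face_obj_def Let_def by auto

lemma nth_snd_face_obj:
  assumes "length (snd X) = Suc n" "i \<le> Suc n" "j < n"
  shows "snd (face_obj C i X) ! j = (if i \<noteq> 0 \<and> j < i - 1 then snd X ! j
    else if i \<noteq> 0 \<and> j = i - 1 then Comp C (snd X ! i) (snd X ! (i - 1)) else snd X ! Suc j)"
proof -
  consider "i = 0" | "i = Suc n" | "0 < i" "i < Suc n" using assms by linarith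
  then show ?thesis
    by cases (use assms in \<open>auto simp: face_obj_def Let_def nth_tl nth_butlast nth_append min_def\<close>)
qed

lemma face_obj_mem:
  assumes C: "is_category C" and X: "X \<in> E_obj C (Suc n)" and i: "i \<le> Suc n"
  shows "face_obj C i X \<in> E_obj C n"
proof -
  have len: "length (fst X) = Suc (Suc n)" "length (snd X) = Suc n"
    using X by (simp_all add: mem_E_obj)
  note u = E_obj_nth_arr[OF X]
  have x: "fst (face_obj C i X) ! j = fst X ! (if j < i then j else Suc j)" if "j \<le> n" for j
    using nth_del_nth[of i "fst X" j] that i len by (simp add: fst_face_obj)
  have "snd (face_obj C i X) ! j \<in> Arr C \<and> Dom C (snd (face_obj C i X) ! j) = fst (face_obj C i X) ! j
      \<and> Cod C (snd (face_obj C i X) ! j) = fst (face_obj C i X) ! Suc j" if j: "j < n" for j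
  proof -
    note face_nth = nth_snd_face_obj[OF len(2) i j, of C]
    consider "i \<noteq> 0" "j < i - 1" | "i \<noteq> 0" "j = i - 1" | "i = 0 \<or> i - 1 < j" by linarith
    then show ?thesis
    proof cases
      case 1
      then show ?thesis using u[of j] x[of j] x[of "Suc j"] j face_nth by auto
    next
      case 2
      then show ?thesis using u[of i] u[of "i - 1"] x[of j] x[of "Suc j"] j face_nth
        by (simp add: cat_comp_arr[OF C] cat_dom_comp[OF C] cat_cod_comp[OF C])
    next
      case 3
      then show ?thesis using u[of "Suc j"] x[of j] x[of "Suc j"] j face_nth by auto
    qed
  qed
  moreover have "set (fst (face_obj C i X)) \<subseteq> Obj C"
    using set_del_nth[of i "fst X"] X unfolding fst_face_obj mem_E_obj by (meson order_trans)
  ultimately show ?thesis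
    using len i by (simp add: mem_E_obj fst_face_obj length_del_nth length_snd_face_obj)
qed

lemma face_arr_mem:
  assumes C: "is_category C" and F: "(X, Y, fs) \<in> E_arr C (Suc n)" and i: "i \<le> Suc n"
  shows "face_arr C i (X, Y, fs) \<in> E_arr C n"
proof -
  have X: "X \<in> E_obj C (Suc n)" and Y: "Y \<in> E_obj C (Suc n)" and lf: "length fs = Suc (Suc n)"
    and f: "\<And>j. j \<le> Suc n \<Longrightarrow> fs ! j \<in> Arr C \<and> Dom C (fs ! j) = fst X ! j \<and> Cod C (fs ! j) = fst Y ! j"
    and sq: "\<And>j. j < Suc n \<Longrightarrow> Comp C (snd Y ! j) (fs ! j) = Comp C (fs ! Suc j) (snd X ! j)"
    using F by (simp_all add: mem_E_arr)
  have lx: "length (fst X) = Suc (Suc n)" "length (snd X) = Suc n"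
    and ly: "length (fst Y) = Suc (Suc n)" "length (snd Y) = Suc n"
    using X Y by (simp_all add: mem_E_obj)
  note u = E_obj_nth_arr[OF X] and v = E_obj_nth_arr[OF Y]
  have arrows: "del_nth i fs ! j \<in> Arr C \<and> Dom C (del_nth i fs ! j) = fst (face_obj C i X) ! j
      \<and> Cod C (del_nth i fs ! j) = fst (face_obj C i Y) ! j" if "j \<le> n" for j
    using f[of "if j < i then j else Suc j"] nth_del_nth[of i fs j] nth_del_nth[of i "fst X" j]
      nth_del_nth[of i "fst Y" j] that i lf lx ly
    by (simp add: fst_face_obj)
  have squares: "Comp C (snd (face_obj C i Y) ! j) (del_nth i fs ! j) =
      Comp C (del_nth i fs ! Suc j) (snd (face_obj C i X) ! j)" if j: "j < n" for j
  proof -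
    have fs_nth: "del_nth i fs ! j = fs ! (if j < i then j else Suc j)"
      "del_nth i fs ! Suc j = fs ! (if Suc j < i then Suc j else Suc (Suc j))"
      using nth_del_nth[of i fs] j i lf by simp_all
    note X_nth = nth_snd_face_obj[OF lx(2) i j, of C]
      and Y_nth = nth_snd_face_obj[OF ly(2) i j, of C]
    consider "i \<noteq> 0" "j < i - 1" | "i \<noteq> 0" "j = i - 1" | "i = 0 \<or> i - 1 < j" by linarith
    then show ?thesis
    proof cases
      case 1
      then show ?thesis using sq[of j] fs_nth X_nth Y_nth j by auto
    next
      case 2
      then have "Suc (i - 1) = i" "i \<le> n" using j by auto
      then have "Comp C (Comp C (snd Y ! i) (snd Y ! (i - 1))) (fs ! (i - 1)) =
          Comp C (fs ! Suc i) (Comp C (snd X ! i) (snd X ! (i - 1)))"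
        using f[of "i - 1"] f[of i] f[of "Suc i"] u[of "i - 1"] u[of i] v[of "i - 1"] v[of i]
          sq[of "i - 1"] sq[of i]
        by (intro cat_paste_squares[OF C]) simp_all
      then show ?thesis using 2 fs_nth X_nth Y_nth by simp
    next
      case 3
      then show ?thesis using sq[of "Suc j"] fs_nth X_nth Y_nth j by auto
    qed
  qed
  show ?thesis
    unfolding face_arr_def using face_obj_mem[OF C X i] face_obj_mem[OF C Y i] arrows squares lf i
    by (simp add: mem_E_arr length_del_nth)
qed

lemma E_id_arr_mem:
  assumes C: "is_category C" and X: "X \<in> E_obj C n"
  shows "(X, X, map (Id C) (fst X)) \<in> E_arr C n"
proof -
  have len: "length (fst X) = Suc n" using X by (simp add: mem_E_obj)
  have "Comp C (snd X ! j) (Id C (fst X ! j)) = Comp C (Id C (fst X ! Suc j)) (snd X ! j)"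
    if "j < n" for j
    using E_obj_nth_arr[OF X that] by (simp add: cat_comp_id_left[OF C] cat_comp_id_right[OF C])
  then show ?thesis
    using X E_obj_nth_obj[OF X] len by (simp add: mem_E_arr C)
qed

lemma face_is_functor:
  assumes C: "is_category C" and i: "i \<le> Suc n"
  shows "is_functor (E_cat C (Suc n)) (E_cat C n) (face_obj C i) (face_arr C i)"
  unfolding is_functor_def
proof (intro conjI ballI impI)
  fix a assume "a \<in> Arr (E_cat C (Suc n))"
  then show "face_arr C i a \<in> Arr (E_cat C n)"
    using face_arr_mem[OF C _ i] by (cases a) simp
next
  fix a b assume "a \<in> Arr (E_cat C (Suc n))" "b \<in> Arr (E_cat C (Suc n))"
    "Cod (E_cat C (Suc n)) a = Dom (E_cat C (Suc n)) b"
  then show "face_arr C i (Comp (E_cat C (Suc n)) b a) =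
      Comp (E_cat C n) (face_arr C i b) (face_arr C i a)"
    by (cases a, cases b) (simp add: face_arr_def mem_E_arr del_nth_map2)
qed (auto simp: face_obj_mem[OF C _ i] face_arr_def fst_face_obj del_nth_map split: prod.splits)

text \<open>Doubles x_(i-1), joining the two copies by an identity; for i = 0 the truncated
i - 1 = 0 doubles x_0.\<close>

definition degen_obj :: "('o, 'm) cat \<Rightarrow> nat \<Rightarrow> ('o, 'm) string_obj \<Rightarrow> ('o, 'm) string_obj" where
  "degen_obj C i X =
    (ins_nth i (fst X ! (i - 1)) (fst X), ins_nth (i - 1) (Id C (fst X ! (i - 1))) (snd X))"

definition degen_arr :: "('o, 'm) cat \<Rightarrow> nat \<Rightarrow> ('o, 'm) ladder \<Rightarrow> ('o, 'm) ladder" where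
  "degen_arr C i F =
    (case F of (X, Y, fs) \<Rightarrow> (degen_obj C i X, degen_obj C i Y, ins_nth i (fs ! (i - 1)) fs))"

lemma nth_ins_nth_dup: "i \<le> length xs \<Longrightarrow> j \<le> length xs \<Longrightarrow>
    ins_nth i (xs ! (i - 1)) xs ! j = xs ! (if j < i then j else j - 1)"
  by (simp add: nth_ins_nth)

lemma set_ins_nth: "set (ins_nth i y xs) = insert y (set xs)"
  unfolding ins_nth_def by (metis Un_insert_right append_take_drop_id list.set(2) set_append)

lemma nth_fst_degen_obj: "length (fst X) = Suc n \<Longrightarrow> i \<le> Suc n \<Longrightarrow> j \<le> Suc n \<Longrightarrow>
    fst (degen_obj C i X) ! j = fst X ! (if j < i then j else j - 1)"
  using nth_ins_nth_dup[of i "fst X" j] by (simp add: degen_obj_def)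

lemma nth_snd_degen_obj: "length (snd X) = n \<Longrightarrow> i \<le> Suc n \<Longrightarrow> j \<le> n \<Longrightarrow>
    snd (degen_obj C i X) ! j = (if j < i - 1 then snd X ! j
      else if j = i - 1 then Id C (fst X ! (i - 1)) else snd X ! (j - 1))"
  using nth_ins_nth[of "i - 1" "snd X" j] by (simp add: degen_obj_def)

lemma degen_obj_mem:
  assumes C: "is_category C" and X: "X \<in> E_obj C n" and i: "i \<le> Suc n"
  shows "degen_obj C i X \<in> E_obj C (Suc n)"
proof -
  have len: "length (fst X) = Suc n" "length (snd X) = n" using X by (simp_all add: mem_E_obj)
  note u = E_obj_nth_arr[OF X] and obj = E_obj_nth_obj[OF X]
    and x = nth_fst_degen_obj[OF len(1) i, of _ C] and us = nth_snd_degen_obj[OF len(2) i, of _ C]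
  have "snd (degen_obj C i X) ! j \<in> Arr C \<and> Dom C (snd (degen_obj C i X) ! j) = fst (degen_obj C i X) ! j
      \<and> Cod C (snd (degen_obj C i X) ! j) = fst (degen_obj C i X) ! Suc j" if j: "j < Suc n" for j
  proof -
    consider "j < i - 1" | "j = i - 1" | "i - 1 < j" by linarith
    then show ?thesis
    proof cases
      case 1
      then show ?thesis using u[of j] us[of j] x[of j] x[of "Suc j"] j i by auto
    next
      case 2
      then show ?thesis using obj[of "i - 1"] us[of j] x[of j] x[of "Suc j"] j i C by auto
    next
      case 3
      then show ?thesis using u[of "j - 1"] us[of j] x[of j] x[of "Suc j"] j by auto
    qed
  qed
  moreover have "set (fst (degen_obj C i X)) \<subseteq> Obj C"
    using X obj[of "i - 1"] i by (simp add: degen_obj_def set_ins_nth mem_E_obj)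
  ultimately show ?thesis
    using len i by (simp add: mem_E_obj degen_obj_def length_ins_nth)
qed

lemma face_degen_obj:
  assumes C: "is_category C" and X: "X \<in> E_obj C n" and i: "i \<le> Suc n"
  shows "face_obj C i (degen_obj C i X) = X"
proof (rule prod_eqI)
  have len: "length (fst X) = Suc n" "length (snd X) = n" using X by (simp_all add: mem_E_obj)
  then show "fst (face_obj C i (degen_obj C i X)) = fst X"
    using i by (simp add: fst_face_obj degen_obj_def del_nth_ins_nth)
  have len_degen: "length (snd (degen_obj C i X)) = Suc n"
    using len i by (simp add: degen_obj_def length_ins_nth)
  show "snd (face_obj C i (degen_obj C i X)) = snd X"
  proof (rule nth_equalityI)
    show "length (snd (face_obj C i (degen_obj C i X))) = length (snd X)"
      using length_snd_face_obj[OF len_degen i] len by simp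
  next
    fix j assume "j < length (snd (face_obj C i (degen_obj C i X)))"
    then have j: "j < n" using length_snd_face_obj[OF len_degen i] by simp
    note us = nth_snd_degen_obj[OF len(2) i, of _ C]
    have "Comp C (snd X ! (i - 1)) (Id C (fst X ! (i - 1))) = snd X ! (i - 1)" if "i - 1 < n"
      using E_obj_nth_arr[OF X that] by (simp add: cat_comp_id_right[OF C])
    then show "snd (face_obj C i (degen_obj C i X)) ! j = snd X ! j"
      using nth_snd_face_obj[OF len_degen i j, of C] us[of j] us[of i] us[of "Suc j"] j i
      by (auto split: if_splits)
  qed
qed

lemma degen_arr_mem:
  assumes C: "is_category C" and F: "(X, Y, fs) \<in> E_arr C n" and i: "i \<le> Suc n"
  shows "degen_arr C i (X, Y, fs) \<in> E_arr C (Suc n)"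
proof -
  have X: "X \<in> E_obj C n" and Y: "Y \<in> E_obj C n" and lf: "length fs = Suc n"
    and f: "\<And>j. j \<le> n \<Longrightarrow> fs ! j \<in> Arr C \<and> Dom C (fs ! j) = fst X ! j \<and> Cod C (fs ! j) = fst Y ! j"
    and sq: "\<And>j. j < n \<Longrightarrow> Comp C (snd Y ! j) (fs ! j) = Comp C (fs ! Suc j) (snd X ! j)"
    using F by (simp_all add: mem_E_arr)
  have lx: "length (fst X) = Suc n" "length (snd X) = n"
    and ly: "length (fst Y) = Suc n" "length (snd Y) = n"
    using X Y by (simp_all add: mem_E_obj)
  note fs_nth = nth_ins_nth_dup[of i fs, unfolded lf, OF i]
  have arrows: "ins_nth i (fs ! (i - 1)) fs ! j \<in> Arr C
      \<and> Dom C (ins_nth i (fs ! (i - 1)) fs ! j) = fst (degen_obj C i X) ! j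
      \<and> Cod C (ins_nth i (fs ! (i - 1)) fs ! j) = fst (degen_obj C i Y) ! j" if "j \<le> Suc n" for j
    using fs_nth[OF that] f[of "if j < i then j else j - 1"] nth_fst_degen_obj[OF lx(1) i that, of C]
      nth_fst_degen_obj[OF ly(1) i that, of C] that i
    by auto
  have squares: "Comp C (snd (degen_obj C i Y) ! j) (ins_nth i (fs ! (i - 1)) fs ! j) =
      Comp C (ins_nth i (fs ! (i - 1)) fs ! Suc j) (snd (degen_obj C i X) ! j)" if j: "j < Suc n" for j
  proof -
    note X_nth = nth_snd_degen_obj[OF lx(2) i, of j C] and Y_nth = nth_snd_degen_obj[OF ly(2) i, of j C]
    consider "j < i - 1" | "j = i - 1" | "i - 1 < j" by linarith
    then show ?thesis
    proof cases
      case 1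
      then show ?thesis using sq[of j] fs_nth[of j] fs_nth[of "Suc j"] X_nth Y_nth j i by auto
    next
      case 2
      have "Comp C (Id C (fst Y ! (i - 1))) (fs ! (i - 1)) = Comp C (fs ! (i - 1)) (Id C (fst X ! (i - 1)))"
        using f[of "i - 1"] j 2 by (simp add: cat_comp_id_left[OF C] cat_comp_id_right[OF C])
      then show ?thesis using 2 fs_nth[of j] fs_nth[of "Suc j"] X_nth Y_nth j by auto
    next
      case 3
      then show ?thesis using sq[of "j - 1"] fs_nth[of j] fs_nth[of "Suc j"] X_nth Y_nth j by auto
    qed
  qed
  show ?thesis
    unfolding degen_arr_def using degen_obj_mem[OF C X i] degen_obj_mem[OF C Y i] arrows squares lf i
    by (simp add: mem_E_arr length_ins_nth)
qed

lemma face_degen_arr: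
  assumes C: "is_category C" and F: "(X, Y, fs) \<in> E_arr C n" and i: "i \<le> Suc n"
  shows "face_arr C i (degen_arr C i (X, Y, fs)) = (X, Y, fs)"
proof -
  have "X \<in> E_obj C n" "Y \<in> E_obj C n" "length fs = Suc n" using F by (simp_all add: mem_E_arr)
  then show ?thesis
    using i by (simp add: face_arr_def degen_arr_def face_degen_obj[OF C] del_nth_ins_nth)
qed

lemma degen_arr_comp:
  assumes F: "(X, Y, fs) \<in> E_arr C n" and G: "(Y, Z, gs) \<in> E_arr C n" and i: "i \<le> Suc n"
  shows "degen_arr C i (Comp (E_cat C n) (Y, Z, gs) (X, Y, fs)) =
    Comp (E_cat C (Suc n)) (degen_arr C i (Y, Z, gs)) (degen_arr C i (X, Y, fs))"
proof -
  have "length fs = Suc n" "length gs = Suc n" using F G by (simp_all add: mem_E_arr)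
  then show ?thesis
    using i by (simp add: degen_arr_def ins_nth_map2[symmetric])
qed

lemma nth_degen_face_obj:
  assumes X: "X \<in> E_obj C (Suc n)" and i: "i \<le> Suc n"
  shows "j \<le> Suc n \<Longrightarrow> fst (degen_obj C i (face_obj C i X)) ! j =
      fst X ! (if j = i then if i = 0 then 1 else i - 1 else j)"
    and "j \<le> n \<Longrightarrow> snd (degen_obj C i (face_obj C i X)) ! j =
      (if j = i - 1 then Id C (fst X ! (if i = 0 then 1 else i - 1))
       else if j = i then Comp C (snd X ! i) (snd X ! (i - 1)) else snd X ! j)"
proof -
  have len: "length (fst X) = Suc (Suc n)" "length (snd X) = Suc n"
    using X by (simp_all add: mem_E_obj)
  have len_face: "length (fst (face_obj C i X)) = Suc n" "length (snd (face_obj C i X)) = n"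
    using len i by (simp_all add: fst_face_obj length_del_nth length_snd_face_obj)
  have xs: "fst (face_obj C i X) ! k = fst X ! (if k < i then k else Suc k)" if "k \<le> n" for k
    using nth_del_nth[of i "fst X" k] that i len by (simp add: fst_face_obj)
  show "fst (degen_obj C i (face_obj C i X)) ! j =
      fst X ! (if j = i then if i = 0 then 1 else i - 1 else j)" if "j \<le> Suc n"
    using nth_fst_degen_obj[OF len_face(1) i that] xs[of "if j < i then j else j - 1"] that i
    by auto
  show "snd (degen_obj C i (face_obj C i X)) ! j =
      (if j = i - 1 then Id C (fst X ! (if i = 0 then 1 else i - 1))
       else if j = i then Comp C (snd X ! i) (snd X ! (i - 1)) else snd X ! j)" if j: "j \<le> n"
    using nth_snd_degen_obj[OF len_face(2) i j] nth_snd_face_obj[OF len(2) i, of _ C]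
      xs[of "i - 1"] j i
    by auto
qed

text \<open>The ladder with identities everywhere except u_(i-1) at position i joins X with the
degeneracy of its i-th face (from X for i = 0, towards X otherwise); face_arr C i deletes its only
non-identity rung.\<close>

lemma face_unit_arr_mem:
  assumes C: "is_category C" and X: "X \<in> E_obj C (Suc n)"
  shows "(X, degen_obj C 0 (face_obj C 0 X), (map (Id C) (fst X))[0 := snd X ! 0]) \<in> E_arr C (Suc n)"
proof -
  let ?Z = "degen_obj C 0 (face_obj C 0 X)" and ?fs = "(map (Id C) (fst X))[0 := snd X ! 0]"
  have len: "length (fst X) = Suc (Suc n)" using X by (simp add: mem_E_obj)
  note u = E_obj_nth_arr[OF X] and obj = E_obj_nth_obj[OF X]
    and z = nth_degen_face_obj[OF X, of 0, simplified]
  have fs: "?fs ! j = (if j = 0 then snd X ! 0 else Id C (fst X ! j))" if "j \<le> Suc n" for j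
    using that len by simp
  have "?fs ! j \<in> Arr C \<and> Dom C (?fs ! j) = fst X ! j \<and> Cod C (?fs ! j) = fst ?Z ! j"
    if "j \<le> Suc n" for j
    using u[of 0] obj[of j] fs[of j] z(1)[of j] that C by auto
  moreover have "Comp C (snd ?Z ! j) (?fs ! j) = Comp C (?fs ! Suc j) (snd X ! j)"
    if "j < Suc n" for j
    using u[of j] fs[of j] fs[of "Suc j"] z(2)[of j] that
    by (auto simp: cat_comp_id_left[OF C] cat_comp_id_right[OF C])
  ultimately show ?thesis
    using X degen_obj_mem[OF C face_obj_mem[OF C X]] len by (simp add: mem_E_arr)
qed

lemma face_counit_arr_mem:
  assumes C: "is_category C" and X: "X \<in> E_obj C (Suc n)" and i: "0 < i" "i \<le> Suc n"
  shows "(degen_obj C i (face_obj C i X), X, (map (Id C) (fst X))[i := snd X ! (i - 1)])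
    \<in> E_arr C (Suc n)"
proof -
  let ?Z = "degen_obj C i (face_obj C i X)" and ?fs = "(map (Id C) (fst X))[i := snd X ! (i - 1)]"
  have len: "length (fst X) = Suc (Suc n)" using X by (simp add: mem_E_obj)
  note u = E_obj_nth_arr[OF X] and obj = E_obj_nth_obj[OF X]
    and z = nth_degen_face_obj[OF X i(2)]
  have fs: "?fs ! j = (if j = i then snd X ! (i - 1) else Id C (fst X ! j))" if "j \<le> Suc n" for j
    using that len by simp
  have "?fs ! j \<in> Arr C \<and> Dom C (?fs ! j) = fst ?Z ! j \<and> Cod C (?fs ! j) = fst X ! j"
    if "j \<le> Suc n" for j
    using u[of "i - 1"] obj[of j] fs[of j] z(1)[of j] that i C by auto
  moreover have "Comp C (snd X ! j) (?fs ! j) = Comp C (?fs ! Suc j) (snd ?Z ! j)"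
    if j: "j < Suc n" for j
  proof -
    have "Comp C (Id C (fst X ! Suc i)) (Comp C (snd X ! i) (snd X ! (i - 1))) =
        Comp C (snd X ! i) (snd X ! (i - 1))" if "i < Suc n"
      using u[of i] u[of "i - 1"] that i(1)
      by (simp add: cat_comp_id_left[OF C] cat_comp_arr[OF C] cat_cod_comp[OF C])
    then show ?thesis
      using u[of j] fs[of j] fs[of "Suc j"] z(2)[of j] j i
      by (auto simp: cat_comp_id_left[OF C] cat_comp_id_right[OF C])
  qed
  ultimately show ?thesis
    using X degen_obj_mem[OF C face_obj_mem[OF C X i(2)] i(2)] len by (simp add: mem_E_arr)
qed

lemma face_vertical_ladder:
  assumes "face_obj C i P = face_obj C i X" "face_obj C i Q = face_obj C i X"
  shows "face_arr C i (P, Q, (map (Id C) (fst X))[i := f]) = Id (E_cat C n) (face_obj C i X)"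
  using assms by (simp add: face_arr_def del_nth_list_update del_nth_map fst_face_obj)

lemma face_sectioned_functor:
  assumes C: "is_category C" and i: "i \<le> Suc n"
  shows "sectioned_functor (E_cat C n) (E_cat C (Suc n))
    (face_obj C i) (face_arr C i) (degen_obj C i) (degen_arr C i)"
proof
  fix X assume X: "X \<in> Obj (E_cat C (Suc n))"
  let ?Z = "degen_obj C i (face_obj C i X)" and ?fs = "(map (Id C) (fst X))[i := snd X ! (i - 1)]"
  have Z: "face_obj C i ?Z = face_obj C i X"
    using face_degen_obj[OF C face_obj_mem[OF C _ i] i] X by simp
  have "face_arr C i (X, ?Z, ?fs) = Id (E_cat C n) (face_obj C i X)"
    "face_arr C i (?Z, X, ?fs) = Id (E_cat C n) (face_obj C i X)"
    by (rule face_vertical_ladder, simp_all only: Z)+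
  moreover have "(X, ?Z, ?fs) \<in> E_arr C (Suc n) \<or> (?Z, X, ?fs) \<in> E_arr C (Suc n)"
    using face_unit_arr_mem[OF C] face_counit_arr_mem[OF C _ _ i] X by (cases "i = 0") auto
  ultimately show "\<exists>a\<in>Arr (E_cat C (Suc n)). face_arr C i a = Id (E_cat C n) (face_obj C i X) \<and>
      (Dom (E_cat C (Suc n)) a = X \<and> Cod (E_cat C (Suc n)) a = ?Z \<or>
       Dom (E_cat C (Suc n)) a = ?Z \<and> Cod (E_cat C (Suc n)) a = X)"
    by fastforce
next
  fix f assume "f \<in> Arr (E_cat C n)"
  then show "degen_arr C i f \<in> Arr (E_cat C (Suc n)) \<and>
      Dom (E_cat C (Suc n)) (degen_arr C i f) = degen_obj C i (Dom (E_cat C n) f) \<and>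
      Cod (E_cat C (Suc n)) (degen_arr C i f) = degen_obj C i (Cod (E_cat C n) f) \<and>
      face_arr C i (degen_arr C i f) = f"
    using degen_arr_mem[OF C _ i] face_degen_arr[OF C _ i] by (cases f) (simp add: degen_arr_def)
next
  fix f g assume "f \<in> Arr (E_cat C n)" "g \<in> Arr (E_cat C n)" "Cod (E_cat C n) f = Dom (E_cat C n) g"
  then show "degen_arr C i (Comp (E_cat C n) g f) =
      Comp (E_cat C (Suc n)) (degen_arr C i g) (degen_arr C i f)"
    using degen_arr_comp[OF _ _ i] by (cases f, cases g) simp
next
  fix X assume "X \<in> Obj (E_cat C n)"
  then show "Id (E_cat C n) X \<in> Arr (E_cat C n) \<and>
      Dom (E_cat C n) (Id (E_cat C n) X) = X \<and> Cod (E_cat C n) (Id (E_cat C n) X) = X"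
    using E_id_arr_mem[OF C] by simp
next
  fix a assume "a \<in> Arr (E_cat C (Suc n))"
  then show "Dom (E_cat C (Suc n)) a \<in> Obj (E_cat C (Suc n)) \<and>
      Cod (E_cat C (Suc n)) a \<in> Obj (E_cat C (Suc n))"
    by (cases a) (simp add: mem_E_arr)
next
  fix X assume "X \<in> Obj (E_cat C n)"
  then show "degen_obj C i X \<in> Obj (E_cat C (Suc n)) \<and> face_obj C i (degen_obj C i X) = X"
    using degen_obj_mem[OF C _ i] face_degen_obj[OF C _ i] by simp
qed (rule face_is_functor[OF C i])

section \<open>The faces of G_1\<close>

lemma G1_cat_simps [simp]:
  "Obj (G1_cat C) = Arr C" "Arr (G1_cat C) = G1_arr C"
  "Dom (G1_cat C) (u, v, h) = u" "Cod (G1_cat C) (u, v, h) = v"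
  "Id (G1_cat C) u = (u, u, None)" "Comp (G1_cat C) = G1_comp C"
  unfolding G1_cat_def by simp_all

lemma G1_arr_cases [consumes 1, case_names identity pair]:
  assumes "a \<in> G1_arr C"
  obtains (identity) u where "u \<in> Arr C" "a = (u, u, None)"
    | (pair) u v w where "u \<in> Arr C" "v \<in> Arr C" "w \<in> Arr C" "Dom C w = Cod C u" "Cod C w = Dom C v"
        "a = (u, v, Some (Comp C w u, Comp C v w))"
  using assms unfolding G1_arr_def by blast

lemma G1_arr_pairI: "u \<in> Arr C \<Longrightarrow> v \<in> Arr C \<Longrightarrow> w \<in> Arr C \<Longrightarrow>
    Dom C w = Cod C u \<Longrightarrow> Cod C w = Dom C v \<Longrightarrow> (u, v, Some (Comp C w u, Comp C v w)) \<in> G1_arr C"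
  unfolding G1_arr_def by blast

lemma G1_comp_simps [simp]:
  "G1_comp C (v, v', h) (u, u', None) = (u, v', h)"
  "G1_comp C (v, v', None) (u, u', Some pq) = (u, v', Some pq)"
  "G1_comp C (v, v', Some (p', q')) (u, u', Some (p, q)) = (u, v', Some (Comp C p' p, Comp C q' q))"
  unfolding G1_comp_def by (simp_all split: prod.splits)

context
  fixes C :: "('o, 'm) cat"
  assumes C: "is_category C"
begin

lemma G1_dom_cod_obj: "a \<in> G1_arr C \<Longrightarrow> Dom (G1_cat C) a \<in> Arr C \<and> Cod (G1_cat C) a \<in> Arr C"
  by (erule G1_arr_cases) simp_all

lemma G_face0_is_functor: "is_functor (G1_cat C) C (Cod C) (G_face0_arr C)"
proof -
  have "G_face0_arr C a \<in> Arr C \<and> Dom C (G_face0_arr C a) = Cod C (Dom (G1_cat C) a)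
      \<and> Cod C (G_face0_arr C a) = Cod C (Cod (G1_cat C) a)" if "a \<in> G1_arr C" for a
    using that by (cases rule: G1_arr_cases)
      (auto simp: G_face0_arr_def C cat_cod_obj cat_comp_arr cat_dom_comp cat_cod_comp)
  moreover have "G_face0_arr C (G1_comp C b a) = Comp C (G_face0_arr C b) (G_face0_arr C a)"
    if "a \<in> G1_arr C" "b \<in> G1_arr C" "Cod (G1_cat C) a = Dom (G1_cat C) b" for a b
    using that by (elim G1_arr_cases)
      (auto simp: G_face0_arr_def C cat_cod_obj cat_comp_arr cat_dom_comp cat_cod_comp
        cat_comp_id_left cat_comp_id_right)
  ultimately show ?thesis
    unfolding is_functor_def by (simp add: G_face0_arr_def C cat_cod_obj)
qed

lemma G_face1_is_functor: "is_functor (G1_cat C) C (Dom C) (G_face1_arr C)"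
proof -
  have "G_face1_arr C a \<in> Arr C \<and> Dom C (G_face1_arr C a) = Dom C (Dom (G1_cat C) a)
      \<and> Cod C (G_face1_arr C a) = Dom C (Cod (G1_cat C) a)" if "a \<in> G1_arr C" for a
    using that by (cases rule: G1_arr_cases)
      (auto simp: G_face1_arr_def C cat_dom_obj cat_comp_arr cat_dom_comp cat_cod_comp)
  moreover have "G_face1_arr C (G1_comp C b a) = Comp C (G_face1_arr C b) (G_face1_arr C a)"
    if "a \<in> G1_arr C" "b \<in> G1_arr C" "Cod (G1_cat C) a = Dom (G1_cat C) b" for a b
    using that by (elim G1_arr_cases)
      (auto simp: G_face1_arr_def C cat_dom_obj cat_comp_arr cat_dom_comp cat_cod_comp
        cat_comp_id_left cat_comp_id_right)
  ultimately show ?thesis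
    unfolding is_functor_def by (simp add: G_face1_arr_def C cat_dom_obj)
qed

definition G1_section_arr :: "'m \<Rightarrow> 'm G_arr" where
  "G1_section_arr f = (Id C (Dom C f), Id C (Cod C f), Some (f, f))"

lemma G1_section_arr_mem: "f \<in> Arr C \<Longrightarrow> G1_section_arr f \<in> G1_arr C"
  using G1_arr_pairI[of "Id C (Dom C f)" C "Id C (Cod C f)" f]
  by (simp add: G1_section_arr_def C cat_dom_obj cat_cod_obj cat_comp_id_left cat_comp_id_right)

lemma G1_section_arr_simps:
  assumes "f \<in> Arr C"
  shows "Dom (G1_cat C) (G1_section_arr f) = Id C (Dom C f)"
    "Cod (G1_cat C) (G1_section_arr f) = Id C (Cod C f)"
    "G_face0_arr C (G1_section_arr f) = f" "G_face1_arr C (G1_section_arr f) = f"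
  by (simp_all add: G1_section_arr_def G_face0_arr_def G_face1_arr_def)

lemma G1_section_arr_comp: "f \<in> Arr C \<Longrightarrow> g \<in> Arr C \<Longrightarrow> Cod C f = Dom C g \<Longrightarrow>
    G1_section_arr (Comp C g f) = G1_comp C (G1_section_arr g) (G1_section_arr f)"
  by (simp add: G1_section_arr_def C cat_dom_comp cat_cod_comp)

lemma G_face0_sectioned_functor:
  "sectioned_functor C (G1_cat C) (Cod C) (G_face0_arr C) (Id C) G1_section_arr"
proof
  fix u assume u: "u \<in> Obj (G1_cat C)"
  let ?b = "Id C (Cod C u)"
  have "(u, ?b, Some (u, ?b)) \<in> G1_arr C" "G_face0_arr C (u, ?b, Some (u, ?b)) = ?b"
    using u G1_arr_pairI[of u C ?b ?b]
    by (simp_all add: G_face0_arr_def C cat_cod_obj cat_comp_id_left)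
  then show "\<exists>a\<in>Arr (G1_cat C). G_face0_arr C a = Id C (Cod C u) \<and>
      (Dom (G1_cat C) a = u \<and> Cod (G1_cat C) a = Id C (Cod C u) \<or>
       Dom (G1_cat C) a = Id C (Cod C u) \<and> Cod (G1_cat C) a = u)"
    by force
qed (auto simp: C G1_dom_cod_obj G_face0_is_functor cat_cod_obj
  G1_section_arr_mem G1_section_arr_simps G1_section_arr_comp)

lemma G_face1_sectioned_functor:
  "sectioned_functor C (G1_cat C) (Dom C) (G_face1_arr C) (Id C) G1_section_arr"
proof
  fix u assume u: "u \<in> Obj (G1_cat C)"
  let ?a = "Id C (Dom C u)"
  have "(?a, u, Some (?a, u)) \<in> G1_arr C" "G_face1_arr C (?a, u, Some (?a, u)) = ?a"
    using u G1_arr_pairI[of ?a C u ?a]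
    by (simp_all add: G_face1_arr_def C cat_dom_obj cat_comp_id_left cat_comp_id_right)
  then show "\<exists>a\<in>Arr (G1_cat C). G_face1_arr C a = Id C (Dom C u) \<and>
      (Dom (G1_cat C) a = u \<and> Cod (G1_cat C) a = Id C (Dom C u) \<or>
       Dom (G1_cat C) a = Id C (Dom C u) \<and> Cod (G1_cat C) a = u)"
    by force
qed (auto simp: C G1_dom_cod_obj G_face1_is_functor cat_dom_obj
  G1_section_arr_mem G1_section_arr_simps G1_section_arr_comp)

end

theorem lemma3p8:
  fixes C :: "('o, 'm) cat"
  assumes "is_category C"
  shows "(\<forall>(n::nat) (M :: (('o, 'm) ladder, ('o, 'm) string_obj, 'k::field) module) i.
            indecomposable (E_cat C n) M \<and> i \<le> Suc n \<longrightarrow>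
            indecomposable (E_cat C (Suc n)) (pullback (face_obj C i) (face_arr C i) M))
       \<and> (\<forall>M :: ('m, 'o, 'k) module. indecomposable C M \<longrightarrow>
            indecomposable (G1_cat C) (pullback (Cod C) (G_face0_arr C) M) \<and>
            indecomposable (G1_cat C) (pullback (Dom C) (G_face1_arr C) M))"
proof (intro conjI allI impI)
  fix n i and M :: "(('o, 'm) ladder, ('o, 'm) string_obj, 'k) module"
  assume "indecomposable (E_cat C n) M \<and> i \<le> Suc n"
  then show "indecomposable (E_cat C (Suc n)) (pullback (face_obj C i) (face_arr C i) M)"
    using sectioned_functor.indecomposable_pullback[OF face_sectioned_functor[OF assms]] by blast
next
  fix M :: "('m, 'o, 'k) module"
  assume "indecomposable C M"
  then show "indecomposable (G1_cat C) (pullback (Cod C) (G_face0_arr C) M)"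
    and "indecomposable (G1_cat C) (pullback (Dom C) (G_face1_arr C) M)"
    using sectioned_functor.indecomposable_pullback[OF G_face0_sectioned_functor[OF assms]]
      sectioned_functor.indecomposable_pullback[OF G_face1_sectioned_functor[OF assms]]
    by blast+
qed

end
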